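(* Let $X_1,X_2,\dots$ be independent integer-valued random variables with common distribution function $F(x)=P(X_1\le x)$, where $F$ is not concentrated on a half-axis, and let $S_0=0$, $S_n=X_1+\cdots+X_n$. Suppose $\mathbb E[X_1]<0$ and that for some $0<\xi<1$ and $0<r<1$, \[ P(X_1\le x)=\xi\, r^{-x},\qquad x=0,-1,-2,\dots. \] Define $p=P(\sup_n S_n>0)$, the measure $L$ on Borel subsets $A\subset(0,\infty)$ by \[ L(A)=\sum_{n=1}^\infty P\Big(\max_{0\le k<n}S_k=0<S_n\in A\Big), \] and \[ \zeta=\sum_{n=1}^\infty P\Big(\max_{1\le k<n}S_k<0,\ S_n=0\Big) \] (the probability that the first weak ladder height, i.e. the value $S_n$ at the first $n\ge1$ with $S_n\ge0$, exists and equals $0$). Then \[ (1-\zeta)\,p=r+(1-r)\,\mathbb E[X_1], \] and for $x=1,2,\dots$, \[ (1-\zeta)\,L(0,x]=F(x)-F(0)+(1-r)\sum_{m=1}^{x}\big(1-F(m)\big). \]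
   Context: For $n=1$ the condition $\max_{1\le k<n}S_k<0$ is vacuous. *)

theory Defs
  imports "HOL-Probability.Probability"
begin

text \<open>Random walk: X 0, X 1, ... play the role of X_1, X_2, ...;
  walk X n w = S_n = X_1 + ... + X_n, so walk X 0 w = S_0 = 0.\<close>
definition walk :: "(nat \<Rightarrow> 'a \<Rightarrow> int) \<Rightarrow> nat \<Rightarrow> 'a \<Rightarrow> int" where
  "walk X n w = (\<Sum>i<n. X i w)"

definition ladder_L :: "'a measure \<Rightarrow> (nat \<Rightarrow> 'a \<Rightarrow> int) \<Rightarrow> int set \<Rightarrow> real" where
  "ladder_L M X A = (\<Sum>n. measure M {w \<in> space M.
      Max ((\<lambda>k. walk X k w) ` {..<Suc n}) = 0 \<and> 0 < walk X (Suc n) w \<and> walk X (Suc n) w \<in> A})"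

definition ladder_zeta :: "'a measure \<Rightarrow> (nat \<Rightarrow> 'a \<Rightarrow> int) \<Rightarrow> real" where
  "ladder_zeta M X = (\<Sum>n. measure M {w \<in> space M.
      (\<forall>k\<in>{1..<Suc n}. walk X k w < 0) \<and> walk X (Suc n) w = 0})"

end

theory Submission
  imports Defs
begin

text \<open>
  For \<open>B = {..-1}\<close> and \<open>B = {..0}\<close> consider the occupation function
  \<open>G\<^sub>B(y) = \<Sum>\<^sub>n P(S\<^sub>1, \<dots>, S\<^sub>n \<in> B, S\<^sub>n = y)\<close>. Conditioning on the last step shows that
  \<open>G\<^sub>B(y) = [y = 0] + [y \<in> B] E G\<^sub>B(y - X\<^sub>1)\<close>, and since the walk drifts to \<open>-\<infinity>\<close> this renewal equation
  has only one bounded nonnegative solution. Because the left tail of \<open>X\<^sub>1\<close> is geometric, the profile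
  \<open>\<alpha>[y = 0] + (1 - r)\<alpha>[y < 0]\<close> is mapped to the constant \<open>(1 - r)\<alpha>\<close> on \<open>y \<le> 0\<close> by \<open>f \<mapsto> E f(\<cdot> - X\<^sub>1)\<close>,
  so it is \<open>G\<^sub>B\<close> for \<open>\<alpha> = 1\<close>, \<open>B = {..-1}\<close> and for \<open>\<alpha> = 1/r\<close>, \<open>B = {..0}\<close>. One more step gives
  \<open>\<zeta> = E G\<^bsub>{..-1}\<^esub>(-X\<^sub>1) = 1 - r\<close> and \<open>L{h} = E G\<^bsub>{..0}\<^esub>(h - X\<^sub>1)\<close> for \<open>h > 0\<close>; summing over
  \<open>h \<le> x\<close> gives \<open>L(0, x]\<close>, and \<open>x \<rightarrow> \<infinity>\<close> together with \<open>E X\<^sub>1 = \<Sum>\<^sub>t P(X\<^sub>1 > t) - \<Sum>\<^sub>t P(X\<^sub>1 < -t)\<close>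
  gives \<open>p\<close>. The drift to \<open>-\<infinity>\<close>, in the form \<open>P(S\<^sub>n \<ge> y) \<rightarrow> 0\<close>, follows from Hoeffding's inequality
  for the steps clamped to a bounded interval and Markov's inequality for the excess over it.
\<close>

lemma measurable_map_upt:
  "m \<le> n \<Longrightarrow> (\<lambda>f. map f [0..<m]) \<in> Pi\<^sub>M {..<n} (\<lambda>_. count_space UNIV) \<rightarrow>\<^sub>M count_space (UNIV :: 'b::countable list set)"
proof (induction m)
  case (Suc m)
  then have [measurable]: "(\<lambda>f. map f [0..<m]) \<in> Pi\<^sub>M {..<n} (\<lambda>_. count_space UNIV) \<rightarrow>\<^sub>M count_space (UNIV :: 'b list set)"
    by simp
  have "m < n"
    using Suc.prems by simp
  have "(\<lambda>f. (map f [0..<m], f m)) \<in> Pi\<^sub>M {..<n} (\<lambda>_. count_space UNIV) \<rightarrow>\<^sub>M count_space UNIV \<Otimes>\<^sub>M count_space (UNIV :: 'b set)"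
    by measurable (use \<open>m < n\<close> in simp)
  then have "(\<lambda>f. (map f [0..<m], f m)) \<in> Pi\<^sub>M {..<n} (\<lambda>_. count_space UNIV) \<rightarrow>\<^sub>M count_space (UNIV :: ('b list \<times> 'b) set)"
    by (simp add: pair_measure_countable)
  from measurable_compose[OF this measurable_count_space[of "\<lambda>(xs, x). xs @ [x]"]]
  show ?case by simp
qed simp

lemma (in prob_space) prob_indep_var_eq_integral:
  fixes U V :: "'a \<Rightarrow> 'b::countable"
  assumes UV: "indep_var (count_space UNIV) U (count_space UNIV) V"
  shows "prob {w \<in> space M. Q (U w) (V w)} = (\<integral>w'. prob {w \<in> space M. Q (U w') (V w)} \<partial>M)"
proof -
  have [measurable]: "U \<in> M \<rightarrow>\<^sub>M count_space UNIV" "V \<in> M \<rightarrow>\<^sub>M count_space UNIV"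
    using indep_var_rv1[OF UV] indep_var_rv2[OF UV] by simp_all
  have pair_count_space: "count_space UNIV \<Otimes>\<^sub>M count_space UNIV = count_space (UNIV :: ('b \<times> 'b) set)"
    by (simp add: pair_measure_countable)
  have Q_sets: "{(a, b). Q a b} \<in> sets (count_space UNIV \<Otimes>\<^sub>M count_space (UNIV :: 'b set))"
    unfolding pair_count_space by simp
  define g where "g a = prob {w \<in> space M. Q a (V w)}" for a
  interpret V: prob_space "distr M (count_space UNIV) V" by (rule prob_space_distr) simp
  have "emeasure M {w \<in> space M. Q (U w) (V w)}
      = emeasure (distr M (count_space UNIV \<Otimes>\<^sub>M count_space UNIV) (\<lambda>w. (U w, V w))) {(a, b). Q a b}"
    by (subst emeasure_distr) (auto simp: Q_sets intro!: arg_cong2[where f=emeasure])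
  also have "\<dots> = emeasure (distr M (count_space UNIV) U \<Otimes>\<^sub>M distr M (count_space UNIV) V) {(a, b). Q a b}"
    using UV by (simp add: indep_var_distribution_eq)
  also have "\<dots> = (\<integral>\<^sup>+a. g a \<partial>distr M (count_space UNIV) U)"
    by (subst V.emeasure_pair_measure_alt, subst sets_pair_measure_cong[OF sets_distr sets_distr])
      (auto simp: Q_sets emeasure_distr g_def emeasure_eq_measure intro!: nn_integral_cong arg_cong[where f=prob])
  also have "\<dots> = (\<integral>\<^sup>+w'. g (U w') \<partial>M)"
    by (simp add: nn_integral_distr)
  also have "\<dots> = (\<integral>w'. g (U w') \<partial>M)"
    by (intro nn_integral_eq_integral integrable_const_bound[where B=1]) (auto simp: g_def)
  finally show ?thesis
    by (simp add: emeasure_eq_measure g_def integral_nonneg_AE)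
qed

lemma integral_excess_tendsto_0:
  fixes Y :: "'a \<Rightarrow> real"
  assumes "integrable M Y"
  shows "(\<lambda>K::nat. \<integral>w. max (Y w - real K) 0 \<partial>M) \<longlonglongrightarrow> 0"
proof -
  have "\<forall>\<^sub>F K in sequentially. max (Y w - real K) 0 = 0" for w
    using eventually_ge_at_top[of "nat \<lceil>Y w\<rceil>"]
    by eventually_elim (use real_nat_ceiling_ge[of "Y w"] in linarith)
  then have "(\<lambda>K::nat. \<integral>w. max (Y w - real K) 0 \<partial>M) \<longlonglongrightarrow> (\<integral>w. 0 \<partial>M)"
    using assms
    by (intro integral_dominated_convergence[where w="\<lambda>w. \<bar>Y w\<bar>"] AE_I2 tendsto_eventually) auto
  then show ?thesis
    by simp
qed

lemma Max_walk_eq_0_iff: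
  "Max ((\<lambda>k. walk X k w) ` {..<Suc n}) = 0 \<longleftrightarrow> (\<forall>k\<in>{1..n}. walk X k w \<le> 0)"
proof -
  have "{..<Suc n} = insert 0 {1..n}"
    by auto
  then have "(\<lambda>k. walk X k w) ` {..<Suc n} = insert 0 ((\<lambda>k. walk X k w) ` {1..n})"
    by (simp add: walk_def)
  then show ?thesis
    by (simp add: Max_eq_iff)
qed

lemma (in prob_space) sums_prob_gt_integral_nat:
  fixes f :: "'a \<Rightarrow> nat"
  assumes f: "f \<in> M \<rightarrow>\<^sub>M count_space UNIV" and integrable: "integrable M (\<lambda>w. real (f w))"
  shows "(\<lambda>t. prob {w \<in> space M. t < f w}) sums (\<integral>w. real (f w) \<partial>M)"
proof -
  have nn_integral: "(\<integral>\<^sup>+w. ennreal (real (f w)) \<partial>M) = (\<Sum>t. ennreal (prob {w \<in> space M. t < f w}))"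
    using nn_integral_nat_function[OF f] by (simp add: ennreal_of_nat_eq_real_of_nat emeasure_eq_measure)
  moreover have "(\<integral>\<^sup>+w. ennreal (real (f w)) \<partial>M) \<noteq> \<infinity>"
    using integrableD(2)[OF integrable] by simp
  ultimately have summable: "summable (\<lambda>t. prob {w \<in> space M. t < f w})"
    by (intro summable_suminf_not_top) auto
  have "(\<integral>w. real (f w) \<partial>M) = enn2real (\<integral>\<^sup>+w. ennreal (real (f w)) \<partial>M)"
    by (rule integral_eq_nn_integral) (use integrable in auto)
  also have "\<dots> = (\<Sum>t. prob {w \<in> space M. t < f w})"
    unfolding nn_integral using suminf_nonneg[OF summable] by (subst suminf_ennreal2[OF _ summable]) auto
  finally show ?thesis
    using summable by (simp add: sums_iff)
qed

lemma (in prob_space) ex_clamp_below_integral_le_half: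
  fixes Y :: "'a \<Rightarrow> real"
  assumes integrable: "integrable M Y" and neg: "(\<integral>w. Y w \<partial>M) < 0"
  shows "\<exists>L::nat. \<forall>K. (\<integral>w. max (min (Y w) K) (- real L) \<partial>M) \<le> (\<integral>w. Y w \<partial>M) / 2"
proof -
  have [measurable]: "Y \<in> borel_measurable M"
    using integrable by (rule borel_measurable_integrable)
  have "\<forall>\<^sub>F L in sequentially. (\<integral>w. max (- Y w - real L) 0 \<partial>M) < - (\<integral>w. Y w \<partial>M) / 2"
    using integrable neg by (intro order_tendstoD(2)[OF integral_excess_tendsto_0]) auto
  then obtain L :: nat where L: "(\<integral>w. max (- Y w - real L) 0 \<partial>M) < - (\<integral>w. Y w \<partial>M) / 2"
    by (auto simp: eventually_sequentially)
  have L_integrable: "integrable M (\<lambda>w. max (- Y w - real L) 0)"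
    by (rule Bochner_Integration.integrable_bound[OF integrable]) (auto intro!: AE_I2)
  have "(\<integral>w. max (min (Y w) K) (- real L) \<partial>M) \<le> (\<integral>w. Y w \<partial>M) / 2" for K
  proof -
    have "(\<integral>w. max (min (Y w) K) (- real L) \<partial>M) \<le> (\<integral>w. Y w + max (- Y w - real L) 0 \<partial>M)"
      using integrable by (intro integral_mono integrable_const_bound[where B="\<bar>K\<bar> + real L"]
          Bochner_Integration.integrable_add integrable L_integrable) auto
    also have "\<dots> = (\<integral>w. Y w \<partial>M) + (\<integral>w. max (- Y w - real L) 0 \<partial>M)"
      using integrable L_integrable by (rule Bochner_Integration.integral_add)
    finally show ?thesis
      using L by simp
  qed
  then show ?thesis
    by blast
qed

lemma sum_telescope_int: "0 \<le> x \<Longrightarrow> (\<Sum>h=1..x. f h - f (h - 1)) = f x - (f 0 :: real)" for x :: int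
proof (induction x rule: int_ge_induct)
  case (step x)
  then have "{1..x + 1} = insert (x + 1) {1..x}"
    by auto
  with step show ?case
    by simp
qed simp

lemma (in prob_space) bounded_range_prob: "bounded (range (\<lambda>y. prob (E y)))"
  by (rule boundedI[where B=1]) auto

section \<open>Random walks with i.i.d. integer steps\<close>

locale iid_walk = prob_space M for M :: "'a measure" +
  fixes X :: "nat \<Rightarrow> 'a \<Rightarrow> int"
  assumes indep: "indep_vars (\<lambda>_. count_space UNIV) X UNIV"
    and ident: "\<And>i. distr M (count_space UNIV) (X i) = distr M (count_space UNIV) (X 0)"
begin

lemma X_measurable[measurable]: "X i \<in> M \<rightarrow>\<^sub>M count_space UNIV"
  using indep unfolding indep_vars_def by auto

text \<open>Events of the walk up to time \<open>n\<close> are events of \<open>prefix n\<close>, a random variable with values in a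
  countable type that is independent of \<open>X n\<close>.\<close>

definition prefix :: "nat \<Rightarrow> 'a \<Rightarrow> int list" where
  "prefix n w = map (\<lambda>i. X i w) [0..<n]"

lemma prefix_eq_map_restrict: "prefix n = (\<lambda>f. map f [0..<n]) \<circ> (\<lambda>w. \<lambda>i\<in>{..<n}. X i w)"
  by (auto simp: prefix_def fun_eq_iff)

lemma prefix_measurable[measurable]: "prefix n \<in> M \<rightarrow>\<^sub>M count_space UNIV"
  by (simp add: prefix_eq_map_restrict measurable_comp[OF measurable_restrict measurable_map_upt])

lemma take_prefix: "k \<le> n \<Longrightarrow> take k (prefix n w) = prefix k w"
  by (simp add: prefix_def take_map)

lemma sum_list_prefix: "sum_list (prefix k w) = walk X k w"
  by (simp add: walk_def prefix_def interv_sum_list_conv_sum_set_nat atLeast0LessThan)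

lemma walk_measurable[measurable]: "walk X k \<in> M \<rightarrow>\<^sub>M count_space UNIV"
proof -
  have "walk X k = sum_list \<circ> prefix k"
    by (simp add: fun_eq_iff sum_list_prefix)
  then show ?thesis by simp
qed

lemma walk_0: "walk X 0 w = 0"
  by (simp add: walk_def)

lemma walk_Suc: "walk X (Suc n) w = walk X n w + X n w"
  by (simp add: walk_def)

text \<open>\<open>indep_var\<close> needs both variables in the same space, so \<open>X n\<close> is wrapped into a one-element list.\<close>

lemma indep_var_last_prefix:
  "indep_var (count_space UNIV) (\<lambda>w. [X n w]) (count_space UNIV) (prefix n)"
proof -
  have "indep_var (Pi\<^sub>M {n} (\<lambda>_. count_space UNIV)) (\<lambda>w. \<lambda>i\<in>{n}. X i w)
      (Pi\<^sub>M {..<n} (\<lambda>_. count_space UNIV)) (\<lambda>w. \<lambda>i\<in>{..<n}. X i w)"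
    by (rule indep_var_restrict[OF indep]) auto
  moreover have "(\<lambda>f. [f n]) \<in> Pi\<^sub>M {n} (\<lambda>_. count_space UNIV) \<rightarrow>\<^sub>M count_space (UNIV :: int list set)"
    by (rule measurable_compose[OF measurable_component_singleton]) auto
  ultimately have "indep_var (count_space UNIV) ((\<lambda>f. [f n]) \<circ> (\<lambda>w. \<lambda>i\<in>{n}. X i w))
      (count_space UNIV) ((\<lambda>f. map f [0..<n]) \<circ> (\<lambda>w. \<lambda>i\<in>{..<n}. X i w))"
    by (rule indep_var_compose[OF _ _ measurable_map_upt[OF order_refl]])
  then show ?thesis
    by (simp add: prefix_eq_map_restrict comp_def)
qed

lemma integral_X_eq_integral_X0: "(\<integral>w. f (X i w) \<partial>M) = (\<integral>w. f (X 0 w) \<partial>M)"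
  for f :: "int \<Rightarrow> real"
  by (subst (1 2) integral_distr[OF X_measurable, symmetric]) (simp_all add: ident[of i])

lemma integrable_X_iff_integrable_X0:
  "integrable M (\<lambda>w. f (X i w)) \<longleftrightarrow> integrable M (\<lambda>w. f (X 0 w))" for f :: "int \<Rightarrow> real"
  by (subst (1 2) integrable_distr_eq[OF X_measurable, symmetric]) (simp_all add: ident[of i])

lemma prob_split_last_step:
  "prob {w \<in> space M. Q (prefix n w) (X n w)} = (\<integral>w'. prob {w \<in> space M. Q (prefix n w) (X 0 w')} \<partial>M)"
  using prob_indep_var_eq_integral[OF indep_var_last_prefix, of "\<lambda>a zs. Q zs (hd a)" n]
    integral_X_eq_integral_X0[of "\<lambda>x. prob {w \<in> space M. Q (prefix n w) x}" n]
  by simp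

definition step_conv :: "(int \<Rightarrow> real) \<Rightarrow> int \<Rightarrow> real" where
  "step_conv f y = (\<integral>w. f (y - X 0 w) \<partial>M)"

lemma integrable_step_conv:
  fixes f :: "int \<Rightarrow> real"
  assumes "bounded (range f)"
  shows "integrable M (\<lambda>w. f (y - X 0 w))"
proof -
  obtain C where "\<And>z. \<bar>f z\<bar> \<le> C"
    using assms by (auto simp: bounded_iff)
  then show ?thesis
    by (intro integrable_const_bound[where B=C]) auto
qed

lemma step_conv_mono:
  "bounded (range f) \<Longrightarrow> bounded (range g) \<Longrightarrow> (\<And>z. f z \<le> g z) \<Longrightarrow> step_conv f y \<le> step_conv g y"
  unfolding step_conv_def by (intro integral_mono integrable_step_conv)

lemma step_conv_nonneg: "(\<And>z. 0 \<le> f z) \<Longrightarrow> 0 \<le> step_conv f y"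
  unfolding step_conv_def by (intro integral_nonneg_AE) auto

lemma step_conv_diff:
  "bounded (range f) \<Longrightarrow> bounded (range g) \<Longrightarrow> step_conv (\<lambda>z. f z - g z) y = step_conv f y - step_conv g y"
  unfolding step_conv_def by (intro Bochner_Integration.integral_diff integrable_step_conv)

lemma step_conv_cmult: "step_conv (\<lambda>z. c * f z) y = c * step_conv f y"
  unfolding step_conv_def by simp

lemma step_conv_sum:
  "(\<And>i. i \<in> I \<Longrightarrow> bounded (range (f i))) \<Longrightarrow> step_conv (\<lambda>z. \<Sum>i\<in>I. f i z) y = (\<Sum>i\<in>I. step_conv (f i) y)"
  unfolding step_conv_def by (intro Bochner_Integration.integral_sum integrable_step_conv)

lemma step_conv_atom_and_left:
  "step_conv (\<lambda>z. if z = 0 then \<alpha> else if z < 0 then \<beta> else 0) y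
    = \<alpha> * prob {w \<in> space M. X 0 w = y} + \<beta> * prob {w \<in> space M. y < X 0 w}"
proof -
  define A where "A = {w \<in> space M. X 0 w = y}"
  define B where "B = {w \<in> space M. y < X 0 w}"
  have [measurable]: "A \<in> sets M" "B \<in> sets M"
    unfolding A_def B_def by measurable
  have "step_conv (\<lambda>z. if z = 0 then \<alpha> else if z < 0 then \<beta> else 0) y
      = (\<integral>w. \<alpha> * indicator A w + \<beta> * indicator B w \<partial>M)"
    unfolding step_conv_def
    by (rule Bochner_Integration.integral_cong) (auto simp: A_def B_def indicator_def)
  also have "\<dots> = \<alpha> * prob A + \<beta> * prob B"
    by (subst Bochner_Integration.integral_add) (auto simp: less_top[symmetric])
  finally show ?thesis
    by (simp add: A_def B_def)
qed

section \<open>Taboo probabilities and their renewal equation\<close>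

text \<open>Only the times \<open>1..n\<close> are required to lie in \<open>B\<close>; the start \<open>S\<^sub>0 = 0\<close> need not.\<close>

definition taboo :: "int set \<Rightarrow> nat \<Rightarrow> int \<Rightarrow> real" where
  "taboo B n y = prob {w \<in> space M. (\<forall>k\<in>{1..n}. walk X k w \<in> B) \<and> walk X n w = y}"

definition walk_tail :: "nat \<Rightarrow> int \<Rightarrow> real" where
  "walk_tail n y = prob {w \<in> space M. y \<le> walk X n w}"

lemma prob_taboo_then_at:
  "prob {w \<in> space M. (\<forall>k\<in>{1..n}. walk X k w \<in> B) \<and> walk X (Suc n) w = h} = step_conv (taboo B n) h"
proof -
  define Q where "Q zs x \<longleftrightarrow> (\<forall>k\<in>{1..n}. sum_list (take k zs) \<in> B) \<and> sum_list zs + x = h" for zs x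
  have "prob {w \<in> space M. (\<forall>k\<in>{1..n}. walk X k w \<in> B) \<and> walk X (Suc n) w = h}
      = prob {w \<in> space M. Q (prefix n w) (X n w)}"
    by (simp add: Q_def take_prefix sum_list_prefix walk_Suc)
  also have "\<dots> = (\<integral>w'. prob {w \<in> space M. Q (prefix n w) (X 0 w')} \<partial>M)"
    by (rule prob_split_last_step)
  also have "\<dots> = step_conv (taboo B n) h"
    unfolding step_conv_def taboo_def
    by (intro Bochner_Integration.integral_cong arg_cong[where f=prob])
      (auto simp: Q_def take_prefix sum_list_prefix)
  finally show ?thesis .
qed

lemma walk_tail_Suc: "walk_tail (Suc n) y = step_conv (walk_tail n) y"
proof -
  define Q where "Q zs x \<longleftrightarrow> y \<le> sum_list zs + x" for zs x
  have "walk_tail (Suc n) y = prob {w \<in> space M. Q (prefix n w) (X n w)}"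
    by (simp add: walk_tail_def Q_def sum_list_prefix walk_Suc)
  also have "\<dots> = (\<integral>w'. prob {w \<in> space M. Q (prefix n w) (X 0 w')} \<partial>M)"
    by (rule prob_split_last_step)
  also have "\<dots> = step_conv (walk_tail n) y"
    unfolding step_conv_def walk_tail_def
    by (intro Bochner_Integration.integral_cong arg_cong[where f=prob]) (auto simp: Q_def sum_list_prefix)
  finally show ?thesis .
qed

lemma walk_tail_0: "walk_tail 0 y = (if y \<le> 0 then 1 else 0)"
  by (simp add: walk_tail_def walk_0 prob_space)

lemma taboo_0: "taboo B 0 y = (if y = 0 then 1 else 0)"
  by (simp add: taboo_def walk_0 prob_space)

lemma taboo_Suc: "taboo B (Suc n) y = (if y \<in> B then step_conv (taboo B n) y else 0)"
proof -
  have "{w \<in> space M. (\<forall>k\<in>{1..Suc n}. walk X k w \<in> B) \<and> walk X (Suc n) w = y} =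
     (if y \<in> B then {w \<in> space M. (\<forall>k\<in>{1..n}. walk X k w \<in> B) \<and> walk X (Suc n) w = y} else {})"
    by (auto simp: atLeastAtMostSuc_conv)
  then show ?thesis
    using prob_taboo_then_at[of n B y] by (simp add: taboo_def)
qed

lemma bounded_range_taboo: "bounded (range (taboo B n))"
  unfolding taboo_def by (rule bounded_range_prob)

lemma bounded_range_taboo_sum: "bounded (range (\<lambda>y. \<Sum>n\<le>N. taboo B n y))"
proof -
  have "\<bar>\<Sum>n\<le>N. taboo B n y\<bar> \<le> (\<Sum>n\<le>N. 1)" for y
    by (rule order_trans[OF sum_abs sum_mono]) (simp add: taboo_def)
  then show ?thesis
    by (intro boundedI[where B="real (Suc N)"]) auto
qed

lemma bounded_range_walk_tail_scaled: "0 \<le> K \<Longrightarrow> bounded (range (\<lambda>y. K * walk_tail n y))"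
  by (rule boundedI[where B=K]) (auto simp: walk_tail_def abs_mult mult_left_le)

context
  fixes B :: "int set" and w :: "int \<Rightarrow> real" and K :: real
  assumes B_nonpos: "B \<subseteq> {..0}"
    and w_nonneg: "\<And>y. 0 \<le> w y" and w_le: "\<And>y. w y \<le> K"
    and w_eq: "\<And>y. w y = (if y = 0 then 1 else 0) + (if y \<in> B then step_conv w y else 0)"
begin

lemma solution_bound_nonneg: "0 \<le> K"
  using w_nonneg[of 0] w_le[of 0] by simp

lemma bounded_range_solution: "bounded (range w)"
  using w_nonneg w_le by (intro boundedI[where B=K]) (auto simp: abs_of_nonneg)

text \<open>The error \<open>e\<^sub>N = w - \<Sum>\<^sub>n\<^sub>\<le>\<^sub>N taboo B n\<close> satisfies \<open>e\<^sub>N\<^sub>+\<^sub>1(y) = [y \<in> B] step_conv e\<^sub>N y\<close>,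
  and \<open>B \<subseteq> {..0}\<close> makes \<open>e\<^sub>0 \<le> K [y \<le> 0]\<close>.\<close>

lemma taboo_sum_error_bounds:
  "0 \<le> w y - (\<Sum>n\<le>N. taboo B n y) \<and> w y - (\<Sum>n\<le>N. taboo B n y) \<le> K * walk_tail N y"
proof (induction N arbitrary: y)
  case 0
  have "taboo B 0 y \<le> w y"
    using w_eq[of y] step_conv_nonneg[of w y, OF w_nonneg] by (simp add: taboo_0)
  moreover have "y \<notin> B \<Longrightarrow> w y = taboo B 0 y"
    using w_eq[of y] by (simp add: taboo_0)
  moreover have "0 \<le> taboo B 0 y"
    by (simp add: taboo_def)
  ultimately show ?case
    using B_nonpos w_le[of y] w_nonneg[of 0] w_le[of 0] by (auto simp: walk_tail_0)
next
  case (Suc N)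
  define e where "e z = w z - (\<Sum>n\<le>N. taboo B n z)" for z
  have e_bounded: "bounded (range e)"
    unfolding e_def using bounded_range_solution bounded_range_taboo_sum by (rule bounded_minus_comp)
  have "(\<Sum>n\<le>Suc N. taboo B n y) = taboo B 0 y + (\<Sum>n\<le>N. taboo B (Suc n) y)"
    by (rule sum.atMost_Suc_shift)
  also have "\<dots> = (if y = 0 then 1 else 0) + (if y \<in> B then step_conv (\<lambda>z. \<Sum>n\<le>N. taboo B n z) y else 0)"
    by (cases "y \<in> B") (simp_all add: taboo_0 taboo_Suc step_conv_sum bounded_range_taboo)
  finally have "w y - (\<Sum>n\<le>Suc N. taboo B n y) = (if y \<in> B then step_conv e y else 0)"
    using w_eq[of y] step_conv_diff[OF bounded_range_solution bounded_range_taboo_sum]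
    by (simp add: e_def[abs_def])
  moreover have "0 \<le> step_conv e y"
    using Suc.IH by (intro step_conv_nonneg) (simp add: e_def)
  moreover have "step_conv e y \<le> K * walk_tail (Suc N) y"
    using step_conv_mono[OF e_bounded bounded_range_walk_tail_scaled[OF solution_bound_nonneg, of N], where y=y] Suc.IH
    by (simp add: e_def step_conv_cmult walk_tail_Suc)
  ultimately show ?case
    using solution_bound_nonneg by (simp add: walk_tail_def)
qed

lemma sums_prob_taboo_then_at:
  assumes walk_tail_lim: "(\<lambda>N. walk_tail N h) \<longlonglongrightarrow> 0"
  shows "(\<lambda>n. prob {w \<in> space M. (\<forall>k\<in>{1..n}. walk X k w \<in> B) \<and> walk X (Suc n) w = h}) sums step_conv w h"
proof -
  define e where "e N z = w z - (\<Sum>n\<le>N. taboo B n z)" for N z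
  have e_bounded: "bounded (range (e N))" for N
    unfolding e_def using bounded_range_solution bounded_range_taboo_sum by (rule bounded_minus_comp)
  have partial_sum: "(\<Sum>n<Suc N. prob {w \<in> space M. (\<forall>k\<in>{1..n}. walk X k w \<in> B) \<and> walk X (Suc n) w = h})
      = step_conv w h - step_conv (e N) h" for N
  proof -
    have "(\<Sum>n<Suc N. prob {w \<in> space M. (\<forall>k\<in>{1..n}. walk X k w \<in> B) \<and> walk X (Suc n) w = h})
        = (\<Sum>n\<le>N. step_conv (taboo B n) h)"
      unfolding lessThan_Suc_atMost by (rule sum.cong[OF refl prob_taboo_then_at])
    then show ?thesis
      using step_conv_diff[OF bounded_range_solution bounded_range_taboo_sum]
      by (simp add: e_def[abs_def] step_conv_sum bounded_range_taboo)
  qed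
  have e_bounds: "0 \<le> e N z" "e N z \<le> K * walk_tail N z" for N z
    using taboo_sum_error_bounds[of z N] unfolding e_def by auto
  have lower: "0 \<le> step_conv (e N) h" for N
    using e_bounds by (intro step_conv_nonneg)
  have upper: "step_conv (e N) h \<le> K * walk_tail (Suc N) h" for N
    using step_conv_mono[OF e_bounded bounded_range_walk_tail_scaled[OF solution_bound_nonneg, of N] e_bounds(2), where y=h]
    by (simp only: step_conv_cmult walk_tail_Suc)
  have "(\<lambda>N. step_conv (e N) h) \<longlonglongrightarrow> 0"
    using tendsto_mult_right_zero[OF walk_tail_lim[THEN LIMSEQ_Suc]]
    by (rule tendsto_sandwich[OF always_eventually always_eventually tendsto_const, rotated 2])
      (use lower upper in auto)
  then have "(\<lambda>N. \<Sum>n<Suc N. prob {w \<in> space M. (\<forall>k\<in>{1..n}. walk X k w \<in> B) \<and> walk X (Suc n) w = h})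
      \<longlonglongrightarrow> step_conv w h"
    unfolding partial_sum using tendsto_diff[OF tendsto_const, of _ 0 _ "step_conv w h"] by simp
  then show ?thesis
    unfolding sums_def by (rule LIMSEQ_imp_Suc)
qed

end

section \<open>Negative drift: the walk ends up below every level\<close>

lemma prob_average_ge_le_exp:
  fixes f :: "int \<Rightarrow> real"
  assumes f: "\<And>x. f x \<in> {a..b}" and "a < b" "0 < N" "0 \<le> t"
  shows "prob {w \<in> space M. (\<integral>w. f (X 0 w) \<partial>M) + t \<le> (\<Sum>i<N. f (X i w)) / real N}
    \<le> exp (- 2 * real N * t\<^sup>2 / (b - a)\<^sup>2)"
proof -
  interpret Hoeffding_ineq_iid M "{..<N}" "\<lambda>i w. f (X i w)" "\<lambda>w. f (X 0 w)" a b "\<integral>w. f (X 0 w) \<partial>M"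
  proof unfold_locales
    show "distr M borel (\<lambda>w. f (X i w)) = distr M borel (\<lambda>w. f (X 0 w))" for i
      by (subst (1 2) distr_distr[OF _ X_measurable, symmetric, unfolded comp_def]) (simp_all add: ident[of i])
    show "indep_vars (\<lambda>_. borel) (\<lambda>i w. f (X i w)) {..<N}"
      by (rule indep_vars_subset[OF indep_vars_compose2[OF indep]]) auto
  qed (use f in auto)
  have "prob {w \<in> space M. (\<integral>w. f (X 0 w) \<partial>M) + t \<le> (\<Sum>i\<in>{..<N}. f (X i w)) / real (card {..<N})}
    \<le> exp (- 2 * real (card {..<N}) * t\<^sup>2 / (b - a)\<^sup>2)"
    by (rule Hoeffding_ineq_ge') (use assms in auto)
  then show ?thesis
    by simp
qed

lemma prob_sum_ge_le_Markov:
  fixes V :: "int \<Rightarrow> real"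
  assumes "integrable M (\<lambda>w. V (X 0 w))" "\<And>x. 0 \<le> V x" "0 < c"
  shows "prob {w \<in> space M. c \<le> (\<Sum>i<N. V (X i w))} \<le> real N * (\<integral>w. V (X 0 w) \<partial>M) / c"
proof -
  have integrable: "integrable M (\<lambda>w. V (X i w))" for i
    using assms(1) by (subst integrable_X_iff_integrable_X0)
  have "prob {w \<in> space M. c \<le> (\<Sum>i<N. V (X i w))} \<le> (\<integral>w. (\<Sum>i<N. V (X i w)) \<partial>M) / c"
    by (rule integral_Markov_inequality_measure[where A="space M"]) (use assms integrable in \<open>auto intro!: sum_nonneg\<close>)
  also have "(\<integral>w. (\<Sum>i<N. V (X i w)) \<partial>M) = (\<Sum>i<N. \<integral>w. V (X i w) \<partial>M)"
    by (rule Bochner_Integration.integral_sum) (rule integrable)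
  also have "\<dots> = (\<Sum>i<N. \<integral>w. V (X 0 w) \<partial>M)"
    by (rule sum.cong[OF refl integral_X_eq_integral_X0])
  finally show ?thesis
    by simp
qed

text \<open>The sum of the steps clamped to \<open>[-L, K]\<close> is controlled by Hoeffding's inequality, the excess over
  \<open>K\<close> by Markov's.\<close>

lemma walk_tail_le_exp_plus_excess:
  fixes K L :: real and N :: nat
  defines "\<mu> \<equiv> \<integral>w. real_of_int (X 0 w) \<partial>M"
  assumes integrable: "integrable M (\<lambda>w. real_of_int (X 0 w))"
    and mean_neg: "\<mu> < 0" and K: "0 \<le> K" and L_K: "- L < K"
    and clamp_mean: "(\<integral>w. max (min (real_of_int (X 0 w)) K) (- L) \<partial>M) \<le> \<mu> / 2"
    and N: "0 < N" and y: "real N * \<mu> / 8 \<le> real_of_int y"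
  shows "walk_tail N y
    \<le> exp (- 2 * (\<mu> / 8)\<^sup>2 / (K + L)\<^sup>2) ^ N + 4 * (\<integral>w. max (real_of_int (X 0 w) - K) 0 \<partial>M) / - \<mu>"
proof -
  define W where "W x = max (min (real_of_int x) K) (- L)" for x :: int
  define V where "V x = max (real_of_int x - K) 0" for x :: int
  have V_integrable: "integrable M (\<lambda>w. V (X 0 w))"
    unfolding V_def by (rule Bochner_Integration.integrable_bound[OF integrable]) (use K in \<open>auto intro!: AE_I2\<close>)
  define EA where "EA = {w \<in> space M. (\<integral>w. W (X 0 w) \<partial>M) + - \<mu> / 8 \<le> (\<Sum>i<N. W (X i w)) / real N}"
  define EB where "EB = {w \<in> space M. - real N * \<mu> / 4 \<le> (\<Sum>i<N. V (X i w))}"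
  have "{w \<in> space M. y \<le> walk X N w} \<subseteq> EA \<union> EB"
  proof safe
    fix w assume w: "w \<in> space M" "y \<le> walk X N w" "w \<notin> EB"
    have "real_of_int y \<le> (\<Sum>i<N. real_of_int (X i w))"
      using w(2) by (simp add: walk_def flip: of_int_sum)
    also have "\<dots> \<le> (\<Sum>i<N. W (X i w)) + (\<Sum>i<N. V (X i w))"
      unfolding sum.distrib[symmetric] by (intro sum_mono) (auto simp: W_def V_def)
    finally have W_sum: "real N * (\<mu> / 2 - \<mu> / 8) \<le> (\<Sum>i<N. W (X i w))"
      using w(3) y by (simp add: EB_def w(1))
    have "real N * ((\<integral>w. W (X 0 w) \<partial>M) + - \<mu> / 8) \<le> real N * (\<mu> / 2 - \<mu> / 8)"
      using clamp_mean by (intro mult_left_mono) (simp_all add: W_def)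
    then have "real N * ((\<integral>w. W (X 0 w) \<partial>M) + - \<mu> / 8) \<le> (\<Sum>i<N. W (X i w))"
      using W_sum by (rule order_trans)
    then show "w \<in> EA"
      using N w(1) by (simp add: EA_def le_divide_eq mult.commute)
  qed
  then have "walk_tail N y \<le> prob (EA \<union> EB)"
    unfolding walk_tail_def EA_def EB_def W_def V_def by (intro finite_measure_mono) measurable
  also have "\<dots> \<le> prob EA + prob EB"
    unfolding EA_def EB_def W_def V_def by (intro measure_Un_le) measurable
  also have "prob EA \<le> exp (- 2 * real N * (- \<mu> / 8)\<^sup>2 / (K - - L)\<^sup>2)"
    unfolding EA_def W_def by (rule prob_average_ge_le_exp) (use L_K N mean_neg in auto)
  also have "\<dots> = exp (- 2 * (\<mu> / 8)\<^sup>2 / (K + L)\<^sup>2) ^ N"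
    by (simp add: exp_of_nat_mult[symmetric] field_simps)
  also have "prob EB \<le> real N * (\<integral>w. V (X 0 w) \<partial>M) / (- real N * \<mu> / 4)"
    unfolding EB_def
    by (rule prob_sum_ge_le_Markov) (use V_integrable mean_neg N in \<open>auto simp: V_def mult_pos_neg\<close>)
  also have "\<dots> = 4 * (\<integral>w. V (X 0 w) \<partial>M) / - \<mu>"
    using N by (simp add: field_simps)
  finally show ?thesis
    by (simp add: V_def)
qed

lemma walk_tail_tendsto_0:
  assumes integrable: "integrable M (\<lambda>w. real_of_int (X 0 w))"
    and mean_neg: "(\<integral>w. real_of_int (X 0 w) \<partial>M) < 0"
  shows "(\<lambda>N. walk_tail N y) \<longlonglongrightarrow> 0"
proof -
  define \<mu> where "\<mu> = (\<integral>w. real_of_int (X 0 w) \<partial>M)"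
  obtain L :: nat where clamp_mean: "\<And>K. (\<integral>w. max (min (real_of_int (X 0 w)) K) (- real L) \<partial>M) \<le> \<mu> / 2"
    using ex_clamp_below_integral_le_half[OF integrable mean_neg] unfolding \<mu>_def by blast
  show ?thesis
  proof (rule order_tendstoI)
    show "\<forall>\<^sub>F N in sequentially. a < walk_tail N y" if "a < 0" for a
      using that by (simp add: walk_tail_def less_le_trans[OF _ measure_nonneg])
    fix \<epsilon> :: real assume \<epsilon>: "0 < \<epsilon>"
    have "\<forall>\<^sub>F K in sequentially. 4 * (\<integral>w. max (real_of_int (X 0 w) - real K) 0 \<partial>M) / - \<mu> < \<epsilon> / 2"
      using mean_neg \<epsilon> unfolding \<mu>_def
      by (intro order_tendstoD(2)[OF tendsto_divide_zero[OF tendsto_mult_right_zero[OF integral_excess_tendsto_0[OF integrable]]]])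
        auto
    from eventually_happens'[OF sequentially_bot eventually_conj[OF eventually_ge_at_top this]]
    obtain K :: nat where K: "1 \<le> K" "4 * (\<integral>w. max (real_of_int (X 0 w) - real K) 0 \<partial>M) / - \<mu> < \<epsilon> / 2"
      by blast
    define \<rho> where "\<rho> = exp (- 2 * (\<mu> / 8)\<^sup>2 / (real K + real L)\<^sup>2)"
    have "\<rho> < 1"
      using K(1) mean_neg unfolding \<rho>_def \<mu>_def by simp
    then have "\<forall>\<^sub>F N in sequentially. \<rho> ^ N < \<epsilon> / 2"
      using \<epsilon> by (intro order_tendstoD(2)[OF LIMSEQ_power_zero]) (auto simp: \<rho>_def)
    moreover have "filterlim (\<lambda>N. - \<mu> / 8 * real N) at_top sequentially"
      using mean_neg unfolding \<mu>_def
      by (intro filterlim_tendsto_pos_mult_at_top[OF tendsto_const _ filterlim_real_sequentially]) simp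
    then have "\<forall>\<^sub>F N in sequentially. - real_of_int y \<le> - \<mu> / 8 * real N"
      unfolding filterlim_at_top by blast
    ultimately show "\<forall>\<^sub>F N in sequentially. walk_tail N y < \<epsilon>"
      using eventually_gt_at_top[of 0]
    proof eventually_elim
      case (elim N)
      have "walk_tail N y \<le> \<rho> ^ N + 4 * (\<integral>w. max (real_of_int (X 0 w) - real K) 0 \<partial>M) / - \<mu>"
        unfolding \<rho>_def \<mu>_def
        by (rule walk_tail_le_exp_plus_excess) (use integrable mean_neg K clamp_mean elim in \<open>auto simp: \<mu>_def mult.commute\<close>)
      then show ?case
        using elim K(2) by simp
    qed
  qed
qed

section \<open>Strict ascending ladder epochs\<close>

definition first_ascent :: "int set \<Rightarrow> nat \<Rightarrow> 'a set" where
  "first_ascent A n =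
    {w \<in> space M. (\<forall>k\<in>{1..n}. walk X k w \<le> 0) \<and> 0 < walk X (Suc n) w \<and> walk X (Suc n) w \<in> A}"

lemma first_ascent_measurable[measurable]: "first_ascent A n \<in> sets M"
  unfolding first_ascent_def by measurable

lemma disjoint_family_first_ascent: "disjoint_family (first_ascent A)"
proof (unfold disjoint_family_on_def, intro ballI impI)
  fix m n :: nat
  assume "m \<in> UNIV" "n \<in> UNIV" "m \<noteq> n"
  then consider "Suc m \<in> {1..n}" | "Suc n \<in> {1..m}"
    by force
  then show "first_ascent A m \<inter> first_ascent A n = {}"
    by cases (fastforce simp: first_ascent_def dest: bspec)+
qed

lemma ladder_L_eq_suminf_first_ascent: "ladder_L M X A = (\<Sum>n. prob (first_ascent A n))"
  by (simp add: ladder_L_def Max_walk_eq_0_iff first_ascent_def)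

lemma ladder_L_eq_prob_first_ascent: "ladder_L M X A = prob (\<Union>n. first_ascent A n)"
  unfolding ladder_L_eq_suminf_first_ascent
  by (intro sums_unique[symmetric] finite_measure_UNION disjoint_family_first_ascent) auto

lemma ladder_L_tendsto_prob_ascent:
  "(\<lambda>m::nat. ladder_L M X {0<..int m}) \<longlonglongrightarrow> prob {w \<in> space M. \<exists>n. 0 < walk X n w}"
proof -
  define G where "G m = (\<Union>n. first_ascent {0<..int m} n)" for m :: nat
  have "(\<Union>m. G m) = {w \<in> space M. \<exists>n. 0 < walk X n w}"
  proof (intro equalityI subsetI)
    fix w assume "w \<in> {w \<in> space M. \<exists>n. 0 < walk X n w}"
    then obtain n where w: "w \<in> space M" "0 < walk X n w"
      by auto
    define n0 where "n0 = (LEAST n. 0 < walk X n w)"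
    have n0: "0 < walk X n0 w" "\<And>k. k < n0 \<Longrightarrow> walk X k w \<le> 0"
      unfolding n0_def using w(2) by (auto intro: LeastI dest: not_less_Least)
    then obtain n' where "n0 = Suc n'"
      by (cases n0) (auto simp: walk_0)
    with w(1) n0 have "w \<in> first_ascent {0<..int (nat (walk X n0 w))} n'"
      by (auto simp: first_ascent_def)
    then show "w \<in> (\<Union>m. G m)"
      unfolding G_def by blast
  qed (auto simp: G_def first_ascent_def)
  moreover have "(\<lambda>m. prob (G m)) \<longlonglongrightarrow> prob (\<Union>m. G m)"
    by (rule finite_Lim_measure_incseq) (auto simp: G_def incseq_def first_ascent_def)
  ultimately show ?thesis
    by (simp add: G_def ladder_L_eq_prob_first_ascent)
qed

end

section \<open>Steps with a geometric left tail\<close>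

locale iid_walk_geometric_left_tail = iid_walk +
  fixes F :: "int \<Rightarrow> real" and \<xi> r :: real
  assumes F_def: "\<And>x. F x = prob {w \<in> space M. X 0 w \<le> x}"
    and integrable: "integrable M (\<lambda>w. real_of_int (X 0 w))"
    and mean_neg: "(\<integral>w. real_of_int (X 0 w) \<partial>M) < 0"
    and r: "0 < r" "r < 1"
    and left_tail: "\<And>x. x \<le> 0 \<Longrightarrow> F x = \<xi> * r ^ nat (- x)"
begin

lemma prob_X0_eq: "prob {w \<in> space M. X 0 w = x} = F x - F (x - 1)"
proof -
  have "{w \<in> space M. X 0 w = x} = {w \<in> space M. X 0 w \<le> x} - {w \<in> space M. X 0 w \<le> x - 1}"
    by auto
  moreover have "prob ({w \<in> space M. X 0 w \<le> x} - {w \<in> space M. X 0 w \<le> x - 1})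
      = prob {w \<in> space M. X 0 w \<le> x} - prob {w \<in> space M. X 0 w \<le> x - 1}"
    by (rule finite_measure_Diff) (measurable, auto)
  ultimately show ?thesis
    unfolding F_def by simp
qed

lemma prob_X0_gt: "prob {w \<in> space M. x < X 0 w} = 1 - F x"
proof -
  have "{w \<in> space M. x < X 0 w} = space M - {w \<in> space M. X 0 w \<le> x}"
    by auto
  then show ?thesis
    unfolding F_def by (simp add: prob_compl)
qed

definition geometric_profile :: "real \<Rightarrow> int \<Rightarrow> real" where
  "geometric_profile \<alpha> z = (if z = 0 then \<alpha> else if z < 0 then (1 - r) * \<alpha> else 0)"

text \<open>This is where the memorylessness of the geometric left tail enters.\<close>

lemma step_conv_geometric_profile_nonpos:
  assumes "y \<le> 0"
  shows "step_conv (geometric_profile \<alpha>) y = (1 - r) * \<alpha>"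
proof -
  have "nat (- (y - 1)) = Suc (nat (- y))"
    using assms by simp
  then show ?thesis
    using assms
    by (simp add: geometric_profile_def[abs_def] step_conv_atom_and_left prob_X0_eq prob_X0_gt left_tail algebra_simps)
qed

lemma step_conv_geometric_profile_pos:
  "0 < y \<Longrightarrow> step_conv (geometric_profile \<alpha>) y = \<alpha> * (F y - F (y - 1)) + (1 - r) * \<alpha> * (1 - F y)"
  by (simp add: geometric_profile_def[abs_def] step_conv_atom_and_left prob_X0_eq prob_X0_gt)

lemma ladder_zeta_eq: "ladder_zeta M X = 1 - r"
proof -
  have "(\<lambda>n. prob {w \<in> space M. (\<forall>k\<in>{1..n}. walk X k w \<in> {..-1}) \<and> walk X (Suc n) w = 0})
      sums step_conv (geometric_profile 1) 0"
    by (rule sums_prob_taboo_then_at[where K=1])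
      (use r walk_tail_tendsto_0[OF integrable mean_neg] in \<open>auto simp: geometric_profile_def step_conv_geometric_profile_nonpos\<close>)
  moreover have "{w \<in> space M. (\<forall>k\<in>{1..n}. walk X k w \<in> {..-1}) \<and> walk X (Suc n) w = 0}
      = {w \<in> space M. (\<forall>k\<in>{1..<Suc n}. walk X k w < 0) \<and> walk X (Suc n) w = 0}" for n
    by (auto simp: atLeastLessThanSuc_atLeastAtMost)
  ultimately show ?thesis
    unfolding ladder_zeta_def by (simp add: sums_iff step_conv_geometric_profile_nonpos)
qed

lemma ladder_L_eq_sum_step_conv:
  "ladder_L M X {0<..x} = (\<Sum>h\<in>{1..x}. step_conv (geometric_profile (1 / r)) h)"
proof -
  define E where "E n h = {w \<in> space M. (\<forall>k\<in>{1..n}. walk X k w \<in> {..0}) \<and> walk X (Suc n) w = h}" for n h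
  have "(\<lambda>n. prob (E n h)) sums step_conv (geometric_profile (1 / r)) h" for h
    unfolding E_def
    by (rule sums_prob_taboo_then_at[where K="1 / r"])
      (use r walk_tail_tendsto_0[OF integrable mean_neg] in \<open>auto simp: geometric_profile_def step_conv_geometric_profile_nonpos field_simps\<close>)
  then have "(\<lambda>n. \<Sum>h\<in>{1..x}. prob (E n h)) sums (\<Sum>h\<in>{1..x}. step_conv (geometric_profile (1 / r)) h)"
    by (rule sums_sum)
  moreover have "prob (first_ascent {0<..x} n) = (\<Sum>h\<in>{1..x}. prob (E n h))" for n
  proof -
    have "first_ascent {0<..x} n = (\<Union>h\<in>{1..x}. E n h)"
      by (auto simp: E_def first_ascent_def)
    moreover have "prob (\<Union>h\<in>{1..x}. E n h) = (\<Sum>h\<in>{1..x}. prob (E n h))"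
      by (rule finite_measure_finite_Union) (auto simp: E_def disjoint_family_on_def)
    ultimately show ?thesis
      by simp
  qed
  ultimately show ?thesis
    by (simp add: ladder_L_eq_suminf_first_ascent sums_iff)
qed

lemma ladder_L_interval:
  assumes "0 \<le> x"
  shows "r * ladder_L M X {0<..x} = F x - F 0 + (1 - r) * (\<Sum>m=1..x. 1 - F m)"
proof -
  have "r * ladder_L M X {0<..x} = (\<Sum>h=1..x. (F h - F (h - 1)) + (1 - r) * (1 - F h))"
    unfolding ladder_L_eq_sum_step_conv sum_distrib_left
    by (rule sum.cong) (use r in \<open>auto simp: step_conv_geometric_profile_pos field_simps\<close>)
  then show ?thesis
    using assms by (simp add: sum.distrib sum_distrib_left sum_telescope_int)
qed

lemma mean_eq_suminf:
  "(\<lambda>t. 1 - F (int t)) sums ((\<integral>w. real_of_int (X 0 w) \<partial>M) + \<xi> * r / (1 - r))"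
proof -
  have pos: "integrable M (\<lambda>w. real (nat (X 0 w)))" and neg: "integrable M (\<lambda>w. real (nat (- X 0 w)))"
    by (rule Bochner_Integration.integrable_bound[OF integrable]; force)+
  have "prob {w \<in> space M. t < nat (X 0 w)} = 1 - F (int t)" for t
    using prob_X0_gt[of "int t"] by (simp add: zless_nat_eq_int_zless)
  then have pos_sums: "(\<lambda>t. 1 - F (int t)) sums (\<integral>w. real (nat (X 0 w)) \<partial>M)"
    using sums_prob_gt_integral_nat[OF _ pos] by simp
  have "prob {w \<in> space M. t < nat (- X 0 w)} = \<xi> * r * r ^ t" for t
  proof -
    have "{w \<in> space M. t < nat (- X 0 w)} = {w \<in> space M. X 0 w \<le> - int t - 1}"
      by auto
    moreover have "nat (- (- int t - 1)) = Suc t"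
      by simp
    ultimately show ?thesis
      using left_tail[of "- int t - 1"] by (simp add: F_def)
  qed
  then have "(\<lambda>t. \<xi> * r * r ^ t) sums (\<integral>w. real (nat (- X 0 w)) \<partial>M)"
    using sums_prob_gt_integral_nat[OF _ neg] by simp
  moreover have "(\<lambda>t. \<xi> * r * r ^ t) sums (\<xi> * r / (1 - r))"
    using sums_mult[OF geometric_sums[of r], of "\<xi> * r"] r by simp
  ultimately have "(\<integral>w. real (nat (- X 0 w)) \<partial>M) = \<xi> * r / (1 - r)"
    using sums_unique2 by blast
  moreover have "(\<integral>w. real_of_int (X 0 w) \<partial>M) = (\<integral>w. real (nat (X 0 w)) \<partial>M) - (\<integral>w. real (nat (- X 0 w)) \<partial>M)"
    by (subst Bochner_Integration.integral_diff[OF pos neg, symmetric]) (auto intro: Bochner_Integration.integral_cong)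
  ultimately show ?thesis
    using pos_sums by simp
qed

lemma F_tendsto_1: "(\<lambda>m::nat. F (int m)) \<longlonglongrightarrow> 1"
proof -
  have "X 0 w \<le> int (nat (X 0 w))" for w
    by simp
  then have "(\<Union>m. {w \<in> space M. X 0 w \<le> int m}) = space M"
    by blast
  moreover have "(\<lambda>m::nat. prob {w \<in> space M. X 0 w \<le> int m}) \<longlonglongrightarrow> prob (\<Union>m. {w \<in> space M. X 0 w \<le> int m})"
    by (rule finite_Lim_measure_incseq) (auto simp: incseq_def)
  ultimately show ?thesis
    by (simp add: F_def prob_space)
qed

lemma prob_ascent_eq:
  "r * prob {w \<in> space M. \<exists>n. 0 < walk X n w} = r + (1 - r) * (\<integral>w. real_of_int (X 0 w) \<partial>M)"
proof -
  define \<mu> where "\<mu> = (\<integral>w. real_of_int (X 0 w) \<partial>M)"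
  define T where "T t = 1 - F (int t)" for t
  have T_sums: "T sums (\<mu> + \<xi> * r / (1 - r))"
    unfolding T_def \<mu>_def using mean_eq_suminf .
  have "(\<Sum>m=1..int k. 1 - F m) = (\<Sum>t<k. T (Suc t))" for k
  proof (induction k)
    case (Suc k)
    have "{1..int (Suc k)} = insert (int k + 1) {1..int k}"
      by auto
    with Suc show ?case
      by (simp add: T_def add.commute)
  qed simp
  then have "(\<lambda>m. r * ladder_L M X {0<..int m}) \<longlonglongrightarrow> 1 - F 0 + (1 - r) * (\<Sum>t. T (Suc t))"
    using summable_LIMSEQ[OF summable_ignore_initial_segment[OF sums_summable[OF T_sums], of 1]]
    by (simp add: ladder_L_interval) (intro tendsto_intros F_tendsto_1)
  moreover have "(\<lambda>m. r * ladder_L M X {0<..int m}) \<longlonglongrightarrow> r * prob {w \<in> space M. \<exists>n. 0 < walk X n w}"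
    by (intro tendsto_intros ladder_L_tendsto_prob_ascent)
  ultimately have "r * prob {w \<in> space M. \<exists>n. 0 < walk X n w} = 1 - F 0 + (1 - r) * (\<Sum>t. T (Suc t))"
    by (rule LIMSEQ_unique[rotated])
  also have "(\<Sum>t. T (Suc t)) = \<mu> + \<xi> * r / (1 - r) - (1 - \<xi>)"
    using suminf_split_head[OF sums_summable[OF T_sums]] T_sums left_tail[of 0]
    by (simp add: sums_iff T_def)
  also have "1 - F 0 + (1 - r) * (\<mu> + \<xi> * r / (1 - r) - (1 - \<xi>)) = r + (1 - r) * \<mu>"
    using r left_tail[of 0] by (simp add: field_simps)
  finally show ?thesis
    by (simp add: \<mu>_def)
qed

end

theorem mainTheorem3:
  fixes M :: "'a measure" and X :: "nat \<Rightarrow> 'a \<Rightarrow> int" and F :: "int \<Rightarrow> real"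
    and \<xi> r :: real
  assumes "prob_space M"
    and indep: "prob_space.indep_vars M (\<lambda>_. count_space UNIV) X UNIV"
    and ident: "\<And>i. distr M (count_space UNIV) (X i) = distr M (count_space UNIV) (X 0)"
    and F_def: "\<And>x. F x = measure M {w \<in> space M. X 0 w \<le> x}"
    and not_half_pos: "measure M {w \<in> space M. X 0 w > 0} > 0"
    and not_half_neg: "measure M {w \<in> space M. X 0 w < 0} > 0"
    and integrable: "integrable M (\<lambda>w. real_of_int (X 0 w))"
    and neg_mean: "(\<integral>w. real_of_int (X 0 w) \<partial>M) < 0"
    and \<xi>: "0 < \<xi>" "\<xi> < 1" and r: "0 < r" "r < 1"
    and left_tail: "\<And>x::int. x \<le> 0 \<Longrightarrow> F x = \<xi> * r ^ nat (- x)"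
  shows "(1 - ladder_zeta M X) * measure M {w \<in> space M. \<exists>n. walk X n w > 0}
           = r + (1 - r) * (\<integral>w. real_of_int (X 0 w) \<partial>M)
       \<and> (\<forall>x::int. 1 \<le> x \<longrightarrow>
           (1 - ladder_zeta M X) * ladder_L M X {0<..x}
           = F x - F 0 + (1 - r) * (\<Sum>m=1..x. 1 - F m))"
proof -
  interpret iid_walk_geometric_left_tail M X F \<xi> r
    by (intro iid_walk_geometric_left_tail.intro iid_walk.intro iid_walk_axioms.intro
        iid_walk_geometric_left_tail_axioms.intro assms)
  have "1 - ladder_zeta M X = r"
    by (simp add: ladder_zeta_eq)
  then show ?thesis
    using prob_ascent_eq ladder_L_interval by simp
qed

end
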